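(* Given $a,b,c\in\ell_\infty$, there is a continuous symmetric trilinear form $A\in\mathcal{L}_s(^3\ell_1)$ such that for every $z_1\in\ell_1''$ and all $z_2,z_3\in c_0^\perp\subseteq\ell_1''$, $$\tilde A(z_1,z_2,z_3)=z_1(a)\,z_2(b)\,z_3(c).$$
   Context: $\ell_1''=\ell_\infty'$ and $c_0^\perp\subseteq\ell_1''$ is the annihilator of $c_0\subseteq\ell_\infty$. For a continuous trilinear form $A$ on $\ell_1$, its canonical (Aron–Berner) extension is $\tilde A(z_1,z_2,z_3)=\lim_{\alpha}\lim_{\beta}\lim_{\gamma}A(x_\alpha,y_\beta,u_\gamma)$, where $(x_\alpha),(y_\beta),(u_\gamma)\subseteq\ell_1$ are nets weak-star converging to $z_1,z_2,z_3$ respectively, with limits taken from the last variable to the first. *)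

theory Defs
  imports "HOL-Analysis.Analysis"
begin

definition l1 :: "(nat \<Rightarrow> real) set" where
  "l1 = {x. summable (\<lambda>n. \<bar>x n\<bar>)}"

definition l1norm :: "(nat \<Rightarrow> real) \<Rightarrow> real" where
  "l1norm x = (\<Sum>n. \<bar>x n\<bar>)"

definition linf :: "(nat \<Rightarrow> real) set" where
  "linf = {f. \<exists>B. \<forall>n. \<bar>f n\<bar> \<le> B}"

definition supnorm :: "(nat \<Rightarrow> real) \<Rightarrow> real" where
  "supnorm f = (SUP n. \<bar>f n\<bar>)"

definition c0 :: "(nat \<Rightarrow> real) set" where
  "c0 = {f. f \<longlonglongrightarrow> 0}"

text \<open>Elements of the bidual l1'' = (l_inf)': continuous linear functionals on l_inf
  (only their values on l_inf matter).\<close>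

definition l1_bidual :: "((nat \<Rightarrow> real) \<Rightarrow> real) \<Rightarrow> bool" where
  "l1_bidual z \<longleftrightarrow>
     (\<forall>f\<in>linf. \<forall>g\<in>linf. z (\<lambda>n. f n + g n) = z f + z g) \<and>
     (\<forall>f\<in>linf. \<forall>c. z (\<lambda>n. c * f n) = c * z f) \<and>
     (\<exists>C. \<forall>f\<in>linf. \<bar>z f\<bar> \<le> C * supnorm f)"

definition c0_perp :: "((nat \<Rightarrow> real) \<Rightarrow> real) \<Rightarrow> bool" where
  "c0_perp z \<longleftrightarrow> l1_bidual z \<and> (\<forall>f\<in>c0. z f = 0)"

definition pair :: "(nat \<Rightarrow> real) \<Rightarrow> (nat \<Rightarrow> real) \<Rightarrow> real" where
  "pair x f = (\<Sum>n. x n * f n)"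

text \<open>Nets are represented by
  (proper) filters on l1: a net (x_alpha) corresponds to its image filter, and all the
  iterated limits in the Aron-Berner definition only depend on this image filter.\<close>

definition wstar_conv :: "(nat \<Rightarrow> real) filter \<Rightarrow> ((nat \<Rightarrow> real) \<Rightarrow> real) \<Rightarrow> bool" where
  "wstar_conv F z \<longleftrightarrow> F \<noteq> bot \<and> (\<forall>\<^sub>F x in F. x \<in> l1) \<and>
     (\<forall>f\<in>linf. ((\<lambda>x. pair x f) \<longlongrightarrow> z f) F)"

definition trilinear_l1 :: "((nat \<Rightarrow> real) \<Rightarrow> (nat \<Rightarrow> real) \<Rightarrow> (nat \<Rightarrow> real) \<Rightarrow> real) \<Rightarrow> bool" where
  "trilinear_l1 A \<longleftrightarrow>
    (\<forall>x\<in>l1. \<forall>x'\<in>l1. \<forall>y\<in>l1. \<forall>u\<in>l1. \<forall>c::real.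
        A (\<lambda>n. x n + x' n) y u = A x y u + A x' y u \<and> A (\<lambda>n. c * x n) y u = c * A x y u \<and>
        A y (\<lambda>n. x n + x' n) u = A y x u + A y x' u \<and> A y (\<lambda>n. c * x n) u = c * A y x u \<and>
        A y u (\<lambda>n. x n + x' n) = A y u x + A y u x' \<and> A y u (\<lambda>n. c * x n) = c * A y u x)"

definition cont_sym_trilinear_l1 :: "((nat \<Rightarrow> real) \<Rightarrow> (nat \<Rightarrow> real) \<Rightarrow> (nat \<Rightarrow> real) \<Rightarrow> real) \<Rightarrow> bool" where
  "cont_sym_trilinear_l1 A \<longleftrightarrow> trilinear_l1 A \<and>
    (\<exists>C. \<forall>x\<in>l1. \<forall>y\<in>l1. \<forall>u\<in>l1. \<bar>A x y u\<bar> \<le> C * l1norm x * l1norm y * l1norm u) \<and>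
    (\<forall>x\<in>l1. \<forall>y\<in>l1. \<forall>u\<in>l1. A x y u = A y x u \<and> A x y u = A x u y)"

text \<open>"The Aron-Berner extension of A takes the value w at (z1,z2,z3)": for all nets
  weak-star converging to z1, z2, z3, the iterated limits (last variable first) exist
  and the outermost one equals w.\<close>

definition AB_ext_value ::
  "((nat \<Rightarrow> real) \<Rightarrow> (nat \<Rightarrow> real) \<Rightarrow> (nat \<Rightarrow> real) \<Rightarrow> real) \<Rightarrow>
   ((nat \<Rightarrow> real) \<Rightarrow> real) \<Rightarrow> ((nat \<Rightarrow> real) \<Rightarrow> real) \<Rightarrow> ((nat \<Rightarrow> real) \<Rightarrow> real) \<Rightarrow> real \<Rightarrow> bool" where
  "AB_ext_value A z1 z2 z3 w \<longleftrightarrow>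
    (\<forall>F1 F2 F3. wstar_conv F1 z1 \<and> wstar_conv F2 z2 \<and> wstar_conv F3 z3 \<longrightarrow>
       (\<forall>x\<in>l1. \<forall>y\<in>l1. \<exists>L. ((\<lambda>u. A x y u) \<longlongrightarrow> L) F3) \<and>
       (\<forall>x\<in>l1. \<exists>M. ((\<lambda>y. Lim F3 (\<lambda>u. A x y u)) \<longlongrightarrow> M) F2) \<and>
       ((\<lambda>x. Lim F2 (\<lambda>y. Lim F3 (\<lambda>u. A x y u))) \<longlongrightarrow> w) F1)"

end

theory Submission
  imports Defs
begin

text \<open>
  A is the symmetrisation of the form sum over i < j < m of a i b j c m x i y j u m.
  A bounded linear functional on l1 is the pairing with its values at the unit vectors e k,
  so along a net weak-star converging to z3 the map u \<mapsto> A(x, y, u) tends to z3 applied to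
  k \<mapsto> A(x, y, e k). This sequence is c k times a convergent sequence plus a null sequence;
  as z3 annihilates c0, the limit is z3(c) S(x, y), where S is the symmetrisation of the form
  sum over i < j of a i b j x i y j.
\<close>

definition unit_vec :: "nat \<Rightarrow> nat \<Rightarrow> real" where
  "unit_vec k = (\<lambda>n. if n = k then 1 else 0)"

definition l1_tail :: "(nat \<Rightarrow> real) \<Rightarrow> nat \<Rightarrow> real" where
  "l1_tail x k = (\<Sum>n. \<bar>x (n + k)\<bar>)"

definition pair_upto :: "(nat \<Rightarrow> real) \<Rightarrow> (nat \<Rightarrow> real) \<Rightarrow> nat \<Rightarrow> real" where
  "pair_upto x f m = (\<Sum>j<m. x j * f j)"

lemma linfI: "(\<And>n. \<bar>f n\<bar> \<le> M) \<Longrightarrow> f \<in> linf"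
  unfolding linf_def by blast

lemma l1_dominated: "x \<in> l1 \<Longrightarrow> (\<And>n. \<bar>y n\<bar> \<le> \<bar>x n\<bar>) \<Longrightarrow> y \<in> l1"
  unfolding l1_def by (auto intro!: summable_comparison_test[where g="\<lambda>n. \<bar>x n\<bar>"])

lemma l1_scale: "x \<in> l1 \<Longrightarrow> (\<lambda>n. r * x n) \<in> l1"
  unfolding l1_def by (auto simp: abs_mult intro: summable_mult)

lemma unit_vec_in_l1: "unit_vec k \<in> l1"
proof -
  have "summable (\<lambda>n. if n = k then (1::real) else 0)"
    using sums_single[of k "\<lambda>_. 1::real"] by (auto simp: summable_def)
  then show ?thesis unfolding l1_def unit_vec_def by (simp add: if_distrib cong: if_cong)
qed

lemma l1norm_unit_vec: "l1norm (unit_vec k) = 1"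
  unfolding l1norm_def unit_vec_def
  using sums_single[of k "\<lambda>_. 1::real", THEN sums_unique] by (simp add: if_distrib cong: if_cong)

lemma l1_tail_tendsto_zero:
  assumes "x \<in> l1"
  shows "l1_tail x \<longlonglongrightarrow> 0"
proof -
  have s: "summable (\<lambda>n. \<bar>x n\<bar>)" using assms by (simp add: l1_def)
  have "(\<lambda>k. (\<Sum>n. \<bar>x n\<bar>) - (\<Sum>i<k. \<bar>x i\<bar>)) \<longlonglongrightarrow> (\<Sum>n. \<bar>x n\<bar>) - (\<Sum>n. \<bar>x n\<bar>)"
    by (intro tendsto_diff tendsto_const summable_LIMSEQ s)
  then show ?thesis unfolding l1_tail_def using suminf_minus_initial_segment[OF s] by simp
qed

lemma summable_abs_pair:
  assumes "x \<in> l1" "f \<in> linf"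
  shows "summable (\<lambda>n. \<bar>x n * f n\<bar>)"
proof -
  obtain M where M: "\<And>n. \<bar>f n\<bar> \<le> M" using assms(2) unfolding linf_def by blast
  have "summable (\<lambda>n. \<bar>x n\<bar> * M)" using assms(1) by (simp add: l1_def summable_mult2)
  then show ?thesis
    by (rule summable_comparison_test'[where N=0]) (simp add: abs_mult M mult_left_mono)
qed

lemma summable_pair: "x \<in> l1 \<Longrightarrow> f \<in> linf \<Longrightarrow> summable (\<lambda>n. x n * f n)"
  by (rule summable_rabs_cancel, rule summable_abs_pair)

lemma pair_abs_le_tail:
  assumes x: "x \<in> l1" and f: "\<And>n. \<bar>f n\<bar> \<le> M" and vanish: "\<And>n. n < k \<Longrightarrow> f n = 0"
  shows "\<bar>pair x f\<bar> \<le> M * l1_tail x k"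
proof -
  have fl: "f \<in> linf" using f by (rule linfI)
  have s: "summable (\<lambda>n. \<bar>x (n + k) * f (n + k)\<bar>)"
    using summable_abs_pair[OF x fl] summable_iff_shift[of "\<lambda>n. \<bar>x n * f n\<bar>" k] by simp
  have sx: "summable (\<lambda>n. \<bar>x (n + k)\<bar>)"
    using x summable_iff_shift[of "\<lambda>n. \<bar>x n\<bar>" k] by (simp add: l1_def)
  have "pair x f = (\<Sum>n. x (n + k) * f (n + k))"
    unfolding pair_def using suminf_split_initial_segment[OF summable_pair[OF x fl], of k] vanish
    by simp
  also have "\<bar>\<dots>\<bar> \<le> (\<Sum>n. \<bar>x (n + k) * f (n + k)\<bar>)"
    by (rule summable_rabs[OF s])
  also have "\<dots> \<le> (\<Sum>n. \<bar>x (n + k)\<bar> * M)"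
    using s sx f by (intro suminf_le summable_mult2) (auto simp: abs_mult intro!: mult_left_mono)
  also have "\<dots> = M * l1_tail x k"
    unfolding l1_tail_def using suminf_mult2[OF sx, of M] by (simp add: mult.commute)
  finally show ?thesis .
qed

lemma pair_abs_le: "x \<in> l1 \<Longrightarrow> (\<And>n. \<bar>f n\<bar> \<le> M) \<Longrightarrow> \<bar>pair x f\<bar> \<le> M * l1norm x"
  using pair_abs_le_tail[of x f M 0] by (simp add: l1_tail_def l1norm_def)

lemma tendsto_pair_zero_if_vanishing_below:
  assumes r: "r \<in> l1" and f: "\<And>k n. \<bar>f k n\<bar> \<le> M" and vanish: "\<And>k n. n < k \<Longrightarrow> f k n = 0"
  shows "(\<lambda>k. pair r (f k)) \<longlonglongrightarrow> 0"
proof (rule Lim_null_comparison)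
  show "\<forall>\<^sub>F k in sequentially. norm (pair r (f k)) \<le> M * l1_tail r k"
    using pair_abs_le_tail[OF r f vanish] by simp
  show "(\<lambda>k. M * l1_tail r k) \<longlonglongrightarrow> 0"
    by (rule tendsto_mult_right_zero[OF l1_tail_tendsto_zero[OF r]])
qed

lemma pair_unit_vec: "pair (unit_vec k) f = f k"
proof -
  have "(\<lambda>n. unit_vec k n * f n) = (\<lambda>n. if n = k then f n else 0)"
    by (auto simp: unit_vec_def)
  then show ?thesis unfolding pair_def using sums_single[of k f, THEN sums_unique] by simp
qed

lemma pair_add_left:
  "x \<in> l1 \<Longrightarrow> y \<in> l1 \<Longrightarrow> f \<in> linf \<Longrightarrow> pair (\<lambda>n. x n + y n) f = pair x f + pair y f"
  unfolding pair_def using suminf_add[OF summable_pair[of x f] summable_pair[of y f]]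
  by (simp add: algebra_simps)

lemma pair_add_right:
  "x \<in> l1 \<Longrightarrow> f \<in> linf \<Longrightarrow> g \<in> linf \<Longrightarrow> pair x (\<lambda>n. f n + g n) = pair x f + pair x g"
  unfolding pair_def using suminf_add[OF summable_pair[of x f] summable_pair[of x g]]
  by (simp add: algebra_simps)

lemma pair_scale_left: "x \<in> l1 \<Longrightarrow> f \<in> linf \<Longrightarrow> pair (\<lambda>n. r * x n) f = r * pair x f"
  unfolding pair_def using suminf_mult[OF summable_pair, of x f r] by (simp add: algebra_simps)

lemma pair_scale_right: "x \<in> l1 \<Longrightarrow> f \<in> linf \<Longrightarrow> pair x (\<lambda>n. r * f n) = r * pair x f"
  unfolding pair_def using suminf_mult[OF summable_pair, of x f r] by (simp add: algebra_simps)

lemma pair_upto_tendsto: "x \<in> l1 \<Longrightarrow> f \<in> linf \<Longrightarrow> pair_upto x f \<longlonglongrightarrow> pair x f"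
  unfolding pair_def pair_upto_def by (rule summable_LIMSEQ[OF summable_pair])

lemma pair_upto_abs_le:
  assumes x: "x \<in> l1" and f: "\<And>j. \<bar>f j\<bar> \<le> M"
  shows "\<bar>pair_upto x f m\<bar> \<le> M * l1norm x"
proof -
  have M: "0 \<le> M" using f[of 0] by linarith
  have "\<bar>pair_upto x f m\<bar> \<le> (\<Sum>j<m. \<bar>x j\<bar> * M)"
    unfolding pair_upto_def
    by (rule order_trans[OF sum_abs]) (auto intro!: sum_mono simp: abs_mult intro: mult_left_mono f)
  also have "\<dots> = M * (\<Sum>j<m. \<bar>x j\<bar>)" by (simp add: sum_distrib_left mult.commute)
  also have "\<dots> \<le> M * l1norm x"
    unfolding l1norm_def using M x by (intro mult_left_mono sum_le_suminf) (auto simp: l1_def)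
  finally show ?thesis .
qed

lemma pair_upto_unit_vec: "pair_upto (unit_vec k) f m = (if k < m then f k else 0)"
proof -
  have "pair_upto (unit_vec k) f m = (\<Sum>j<m. if j = k then f k else 0)"
    unfolding pair_upto_def by (rule sum.cong) (auto simp: unit_vec_def)
  then show ?thesis by simp
qed

lemma pair_upto_add_left: "pair_upto (\<lambda>n. x n + y n) f m = pair_upto x f m + pair_upto y f m"
  unfolding pair_upto_def by (simp add: sum.distrib algebra_simps)

lemma pair_upto_scale_left: "pair_upto (\<lambda>n. r * x n) f m = r * pair_upto x f m"
  unfolding pair_upto_def by (simp add: sum_distrib_left algebra_simps)

definition bounded_linear_l1 :: "((nat \<Rightarrow> real) \<Rightarrow> real) \<Rightarrow> bool" where
  "bounded_linear_l1 \<phi> \<longleftrightarrow>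
     (\<forall>u\<in>l1. \<forall>v\<in>l1. \<phi> (\<lambda>n. u n + v n) = \<phi> u + \<phi> v) \<and>
     (\<forall>u\<in>l1. \<forall>r. \<phi> (\<lambda>n. r * u n) = r * \<phi> u) \<and>
     (\<exists>C. \<forall>u\<in>l1. \<bar>\<phi> u\<bar> \<le> C * l1norm u)"

lemma bounded_linear_l1I:
  assumes "\<And>u v. u \<in> l1 \<Longrightarrow> v \<in> l1 \<Longrightarrow> \<phi> (\<lambda>n. u n + v n) = \<phi> u + \<phi> v"
    and "\<And>u r. u \<in> l1 \<Longrightarrow> \<phi> (\<lambda>n. r * u n) = r * \<phi> u"
    and "\<And>u. u \<in> l1 \<Longrightarrow> \<bar>\<phi> u\<bar> \<le> C * l1norm u"
  shows "bounded_linear_l1 \<phi>"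
  unfolding bounded_linear_l1_def using assms by blast

lemma bounded_linear_l1_add_arg:
  "bounded_linear_l1 \<phi> \<Longrightarrow> u \<in> l1 \<Longrightarrow> v \<in> l1 \<Longrightarrow> \<phi> (\<lambda>n. u n + v n) = \<phi> u + \<phi> v"
  unfolding bounded_linear_l1_def by blast

lemma bounded_linear_l1_scale_arg:
  "bounded_linear_l1 \<phi> \<Longrightarrow> u \<in> l1 \<Longrightarrow> \<phi> (\<lambda>n. r * u n) = r * \<phi> u"
  unfolding bounded_linear_l1_def by blast

lemma bounded_linear_l1_bound:
  assumes "bounded_linear_l1 \<phi>"
  obtains C where "\<And>u. u \<in> l1 \<Longrightarrow> \<bar>\<phi> u\<bar> \<le> C * l1norm u"
  using assms unfolding bounded_linear_l1_def by blast

lemma bounded_linear_l1_add: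
  assumes \<phi>: "bounded_linear_l1 \<phi>" and \<psi>: "bounded_linear_l1 \<psi>"
  shows "bounded_linear_l1 (\<lambda>u. \<phi> u + \<psi> u)"
proof -
  obtain C where C: "\<And>u. u \<in> l1 \<Longrightarrow> \<bar>\<phi> u\<bar> \<le> C * l1norm u"
    using \<phi> bounded_linear_l1_bound by blast
  obtain D where D: "\<And>u. u \<in> l1 \<Longrightarrow> \<bar>\<psi> u\<bar> \<le> D * l1norm u"
    using \<psi> bounded_linear_l1_bound by blast
  show ?thesis
  proof (rule bounded_linear_l1I)
    fix u assume u: "u \<in> l1"
    show "\<bar>\<phi> u + \<psi> u\<bar> \<le> (C + D) * l1norm u"
      using C[OF u] D[OF u] abs_triangle_ineq[of "\<phi> u" "\<psi> u"] unfolding distrib_right by linarith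
    show "\<phi> (\<lambda>n. r * u n) + \<psi> (\<lambda>n. r * u n) = r * (\<phi> u + \<psi> u)" for r
      using \<phi> \<psi> u by (simp add: bounded_linear_l1_scale_arg distrib_left)
    fix v assume v: "v \<in> l1"
    show "\<phi> (\<lambda>n. u n + v n) + \<psi> (\<lambda>n. u n + v n) = \<phi> u + \<psi> u + (\<phi> v + \<psi> v)"
      using \<phi> \<psi> u v by (simp add: bounded_linear_l1_add_arg)
  qed
qed

lemma bounded_linear_l1_pair:
  assumes f: "f \<in> linf"
  shows "bounded_linear_l1 (\<lambda>x. pair x f)"
proof -
  obtain M where M: "\<And>n. \<bar>f n\<bar> \<le> M" using f unfolding linf_def by blast
  show ?thesis
    by (rule bounded_linear_l1I[OF pair_add_left[OF _ _ f] pair_scale_left[OF _ f] pair_abs_le[OF _ M]])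
qed

lemma bounded_linear_l1_pair_right:
  assumes r: "r \<in> l1"
    and add: "\<And>u v n. f (\<lambda>n. u n + v n) n = f u n + f v n"
    and scale: "\<And>u t n. f (\<lambda>n. t * u n) n = t * f u n"
    and bound: "\<And>u n. u \<in> l1 \<Longrightarrow> \<bar>f u n\<bar> \<le> C * l1norm u"
  shows "bounded_linear_l1 (\<lambda>u. pair r (f u))"
proof (rule bounded_linear_l1I)
  have fl: "f u \<in> linf" if "u \<in> l1" for u using bound[OF that] by (rule linfI)
  fix u assume u: "u \<in> l1"
  show "\<bar>pair r (f u)\<bar> \<le> (C * l1norm r) * l1norm u"
    using pair_abs_le[OF r bound[OF u]] by (simp add: mult_ac)
  show "pair r (f (\<lambda>n. t * u n)) = t * pair r (f u)" for t
    unfolding scale using pair_scale_right[OF r fl[OF u]] by simp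
  fix v assume v: "v \<in> l1"
  show "pair r (f (\<lambda>n. u n + v n)) = pair r (f u) + pair r (f v)"
    unfolding add using pair_add_right[OF r fl[OF u] fl[OF v]] by simp
qed

lemma bounded_linear_l1_unit_vec_linf:
  assumes "bounded_linear_l1 \<phi>"
  shows "(\<lambda>k. \<phi> (unit_vec k)) \<in> linf"
proof -
  obtain C where "\<And>u. u \<in> l1 \<Longrightarrow> \<bar>\<phi> u\<bar> \<le> C * l1norm u"
    using assms bounded_linear_l1_bound by blast
  from this[OF unit_vec_in_l1] show ?thesis by (intro linfI) (simp add: l1norm_unit_vec)
qed

lemma bounded_linear_l1_truncate:
  assumes \<phi>: "bounded_linear_l1 \<phi>" and u: "u \<in> l1"
  shows "\<phi> (\<lambda>n. if n < N then u n else 0) = pair_upto u (\<lambda>k. \<phi> (unit_vec k)) N"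
proof -
  define head where "head N = (\<lambda>n. if n < N then u n else 0)" for N
  have head_l1: "head N \<in> l1" for N by (rule l1_dominated[OF u]) (auto simp: head_def)
  have "\<phi> (head N) = pair_upto u (\<lambda>k. \<phi> (unit_vec k)) N"
  proof (induction N)
    case 0
    have "head 0 = (\<lambda>n. 0 * u n)" by (simp add: head_def)
    then show ?case using bounded_linear_l1_scale_arg[OF \<phi> u, of 0] by (simp add: pair_upto_def)
  next
    case (Suc N)
    have "head (Suc N) = (\<lambda>n. head N n + u N * unit_vec N n)"
      by (auto simp: head_def unit_vec_def less_Suc_eq)
    then have "\<phi> (head (Suc N)) = \<phi> (head N) + u N * \<phi> (unit_vec N)"
      using bounded_linear_l1_add_arg[OF \<phi> head_l1 l1_scale[OF unit_vec_in_l1]]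
        bounded_linear_l1_scale_arg[OF \<phi> unit_vec_in_l1] by simp
    then show ?case using Suc by (simp add: pair_upto_def)
  qed
  then show ?thesis by (simp add: head_def)
qed

lemma bounded_linear_l1_eq_pair:
  assumes \<phi>: "bounded_linear_l1 \<phi>" and u: "u \<in> l1"
  shows "\<phi> u = pair u (\<lambda>k. \<phi> (unit_vec k))"
proof -
  obtain C where bound: "\<And>u. u \<in> l1 \<Longrightarrow> \<bar>\<phi> u\<bar> \<le> C * l1norm u"
    using \<phi> bounded_linear_l1_bound by blast
  define tail where "tail N = (\<lambda>n. if n < N then 0 else u n)" for N
  have tail_l1: "tail N \<in> l1" for N by (rule l1_dominated[OF u]) (auto simp: tail_def)
  have split: "\<phi> u = pair_upto u (\<lambda>k. \<phi> (unit_vec k)) N + \<phi> (tail N)" for N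
  proof -
    have head_l1: "(\<lambda>n. if n < N then u n else 0) \<in> l1" by (rule l1_dominated[OF u]) auto
    have eq: "(\<lambda>n. (if n < N then u n else 0) + tail N n) = u" by (auto simp: tail_def)
    show ?thesis
      using bounded_linear_l1_add_arg[OF \<phi> head_l1 tail_l1[of N]] bounded_linear_l1_truncate[OF \<phi> u]
      unfolding eq by simp
  qed
  have "l1norm (tail N) = l1_tail u N" for N
    using suminf_split_initial_segment[of "\<lambda>n. \<bar>tail N n\<bar>" N] tail_l1[of N]
    by (simp add: l1norm_def l1_tail_def l1_def tail_def)
  then have "\<forall>\<^sub>F N in sequentially. norm (\<phi> (tail N)) \<le> C * l1_tail u N"
    using bound[OF tail_l1] by simp
  then have "(\<lambda>N. \<phi> (tail N)) \<longlonglongrightarrow> 0"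
    by (rule Lim_null_comparison[OF _ tendsto_mult_right_zero[OF l1_tail_tendsto_zero[OF u]]])
  then have "(\<lambda>N. \<phi> u - \<phi> (tail N)) \<longlonglongrightarrow> \<phi> u - 0"
    by (intro tendsto_diff tendsto_const)
  moreover have "(\<lambda>N. \<phi> u - \<phi> (tail N)) = pair_upto u (\<lambda>k. \<phi> (unit_vec k))"
    using split by (auto simp: algebra_simps)
  ultimately have "pair_upto u (\<lambda>k. \<phi> (unit_vec k)) \<longlonglongrightarrow> \<phi> u" by simp
  moreover have "pair_upto u (\<lambda>k. \<phi> (unit_vec k)) \<longlonglongrightarrow> pair u (\<lambda>k. \<phi> (unit_vec k))"
    using u bounded_linear_l1_unit_vec_linf[OF \<phi>] by (rule pair_upto_tendsto)
  ultimately show ?thesis by (rule LIMSEQ_unique)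
qed

lemma tendsto_wstar_bounded_linear_l1:
  assumes F: "wstar_conv F z" and \<phi>: "bounded_linear_l1 \<phi>"
  shows "(\<phi> \<longlongrightarrow> z (\<lambda>k. \<phi> (unit_vec k))) F"
proof -
  have "((\<lambda>u. pair u (\<lambda>k. \<phi> (unit_vec k))) \<longlongrightarrow> z (\<lambda>k. \<phi> (unit_vec k))) F"
    using F bounded_linear_l1_unit_vec_linf[OF \<phi>] by (simp add: wstar_conv_def)
  moreover have "\<forall>\<^sub>F u in F. u \<in> l1" using F by (simp add: wstar_conv_def)
  then have "\<forall>\<^sub>F u in F. pair u (\<lambda>k. \<phi> (unit_vec k)) = \<phi> u"
    by (rule eventually_mono) (simp add: bounded_linear_l1_eq_pair[OF \<phi>])
  ultimately show ?thesis by (rule Lim_transform_eventually)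
qed

lemma c0_perp_asymptotic:
  assumes z: "c0_perp z" and d: "d \<in> linf" and g: "g \<longlonglongrightarrow> L" and v: "v \<longlonglongrightarrow> 0"
  shows "z (\<lambda>k. d k * g k + v k) = L * z d"
proof -
  have add: "\<And>f h. f \<in> linf \<Longrightarrow> h \<in> linf \<Longrightarrow> z (\<lambda>n. f n + h n) = z f + z h"
    and scale: "\<And>f r. f \<in> linf \<Longrightarrow> z (\<lambda>n. r * f n) = r * z f"
    and null: "\<And>f. f \<in> c0 \<Longrightarrow> z f = 0"
    using z unfolding c0_perp_def l1_bidual_def by blast+
  obtain M where M: "\<And>n. \<bar>d n\<bar> \<le> M" using d unfolding linf_def by blast
  define e where "e k = d k * (g k - L) + v k" for k
  have "\<forall>\<^sub>F k in sequentially. norm (d k * (g k - L)) \<le> M * norm (g k - L)"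
    using M by (simp add: abs_mult mult_right_mono)
  moreover have "(\<lambda>k. M * norm (g k - L)) \<longlonglongrightarrow> 0"
    using g by (intro tendsto_mult_right_zero tendsto_norm_zero LIM_zero)
  ultimately have "(\<lambda>k. d k * (g k - L)) \<longlonglongrightarrow> 0" by (rule Lim_null_comparison)
  then have e_lim: "e \<longlonglongrightarrow> 0" unfolding e_def using v by (rule tendsto_add_zero)
  then have e_c0: "e \<in> c0" by (simp add: c0_def)
  have "Bseq e" using e_lim by (rule convergent_imp_Bseq[OF convergentI])
  then obtain B where "\<forall>k. norm (e k) \<le> B" by (rule BseqE)
  then have e_linf: "e \<in> linf" by (intro linfI[where M=B]) simp
  have Ld_linf: "(\<lambda>k. L * d k) \<in> linf"
    using M by (intro linfI[where M="\<bar>L\<bar> * M"]) (simp add: abs_mult mult_left_mono)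
  have "(\<lambda>k. d k * g k + v k) = (\<lambda>k. L * d k + e k)"
    by (auto simp: e_def algebra_simps)
  then show ?thesis using add[OF Ld_linf e_linf] scale[OF d] null[OF e_c0] by simp
qed

lemma tendsto_wstar_c0_perp:
  assumes "wstar_conv F z" "c0_perp z" "bounded_linear_l1 \<phi>" "d \<in> linf" "g \<longlonglongrightarrow> L" "v \<longlonglongrightarrow> 0"
    and "\<And>k. \<phi> (unit_vec k) = d k * g k + v k"
  shows "(\<phi> \<longlongrightarrow> L * z d) F"
  using tendsto_wstar_bounded_linear_l1[OF assms(1,3)] c0_perp_asymptotic[OF assms(2,4-6)] assms(7)
  by simp

lemma AB_ext_valueI:
  assumes lim3: "\<And>F x y. wstar_conv F z3 \<Longrightarrow> x \<in> l1 \<Longrightarrow> y \<in> l1 \<Longrightarrow> (A x y \<longlongrightarrow> B x y) F"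
    and lim2: "\<And>F x. wstar_conv F z2 \<Longrightarrow> x \<in> l1 \<Longrightarrow> (B x \<longlongrightarrow> C x) F"
    and lim1: "\<And>F. wstar_conv F z1 \<Longrightarrow> (C \<longlongrightarrow> w) F"
  shows "AB_ext_value A z1 z2 z3 w"
  unfolding AB_ext_value_def
proof (intro allI impI conjI ballI)
  fix F1 F2 F3 assume "wstar_conv F1 z1 \<and> wstar_conv F2 z2 \<and> wstar_conv F3 z3"
  then have F1: "wstar_conv F1 z1" and F2: "wstar_conv F2 z2" and F3: "wstar_conv F3 z3" by auto
  have Lim3: "Lim F3 (A x y) = B x y" if "x \<in> l1" "y \<in> l1" for x y
    using F3 lim3[OF F3 that] by (simp add: wstar_conv_def tendsto_Lim)
  have lim2': "((\<lambda>y. Lim F3 (A x y)) \<longlongrightarrow> C x) F2" if x: "x \<in> l1" for x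
  proof -
    have "\<forall>\<^sub>F y in F2. y \<in> l1" using F2 by (simp add: wstar_conv_def)
    then have "\<forall>\<^sub>F y in F2. B x y = Lim F3 (A x y)"
      by (rule eventually_mono) (simp add: Lim3 x)
    with lim2[OF F2 x] show ?thesis by (rule Lim_transform_eventually)
  qed
  have Lim2: "Lim F2 (\<lambda>y. Lim F3 (A x y)) = C x" if "x \<in> l1" for x
    using F2 lim2'[OF that] by (simp add: wstar_conv_def tendsto_Lim)
  have "\<forall>\<^sub>F x in F1. x \<in> l1" using F1 by (simp add: wstar_conv_def)
  then have "\<forall>\<^sub>F x in F1. C x = Lim F2 (\<lambda>y. Lim F3 (A x y))"
    by (rule eventually_mono) (simp add: Lim2)
  with lim1[OF F1] show "((\<lambda>x. Lim F2 (\<lambda>y. Lim F3 (\<lambda>u. A x y u))) \<longlongrightarrow> w) F1"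
    by (rule Lim_transform_eventually)
  show "\<exists>L. ((\<lambda>u. A x y u) \<longlongrightarrow> L) F3" if "x \<in> l1" "y \<in> l1" for x y
    using lim3[OF F3 that] by blast
  show "\<exists>M. ((\<lambda>y. Lim F3 (\<lambda>u. A x y u)) \<longlongrightarrow> M) F2" if "x \<in> l1" for x
    using lim2'[OF that] by blast
qed

lemma cont_sym_trilinear_l1I:
  assumes swap12: "\<And>x y u. A x y u = A y x u" and swap23: "\<And>x y u. A x y u = A x u y"
    and lin: "\<And>x y. x \<in> l1 \<Longrightarrow> y \<in> l1 \<Longrightarrow> bounded_linear_l1 (A x y)"
    and bound: "\<And>x y u. x \<in> l1 \<Longrightarrow> y \<in> l1 \<Longrightarrow> u \<in> l1 \<Longrightarrow>
      \<bar>A x y u\<bar> \<le> C * l1norm x * l1norm y * l1norm u"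
  shows "cont_sym_trilinear_l1 A"
proof -
  have rotate: "A x y u = A y u x" for x y u using swap12 swap23 by metis
  have "trilinear_l1 A"
    unfolding trilinear_l1_def
  proof (intro ballI allI conjI)
    fix x x' y u :: "nat \<Rightarrow> real" and r :: real
    assume x: "x \<in> l1" and x': "x' \<in> l1" and y: "y \<in> l1" and u: "u \<in> l1"
    have add: "A v w (\<lambda>n. x n + x' n) = A v w x + A v w x'"
      and scale: "A v w (\<lambda>n. r * x n) = r * A v w x" if "v \<in> l1" "w \<in> l1" for v w
      using bounded_linear_l1_add_arg[OF lin[OF that] x x'] bounded_linear_l1_scale_arg[OF lin[OF that] x]
      by auto
    show "A y u (\<lambda>n. x n + x' n) = A y u x + A y u x'" "A y u (\<lambda>n. r * x n) = r * A y u x"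
      using add[OF y u] scale[OF y u] by auto
    show "A y (\<lambda>n. x n + x' n) u = A y x u + A y x' u" "A y (\<lambda>n. r * x n) u = r * A y x u"
      using add[OF y u] scale[OF y u] swap23 by metis+
    show "A (\<lambda>n. x n + x' n) y u = A x y u + A x' y u" "A (\<lambda>n. r * x n) y u = r * A x y u"
      using add[OF y u] scale[OF y u] rotate by metis+
  qed
  with bound swap12 swap23 show ?thesis unfolding cont_sym_trilinear_l1_def by blast
qed

text \<open>
  ord_form2 a b p q is the sum of a i * b j * p i * q j over i < j, and ord_form3 a b c p q r
  the sum of a i * b j * c m * p i * q j * r m over i < j < m.
\<close>

definition ord_kernel2 :: "(nat \<Rightarrow> real) \<Rightarrow> (nat \<Rightarrow> real) \<Rightarrow> (nat \<Rightarrow> real) \<Rightarrow> nat \<Rightarrow> real" where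
  "ord_kernel2 a b p j = b j * pair_upto p a j"

definition ord_kernel3 ::
  "(nat \<Rightarrow> real) \<Rightarrow> (nat \<Rightarrow> real) \<Rightarrow> (nat \<Rightarrow> real) \<Rightarrow> (nat \<Rightarrow> real) \<Rightarrow> (nat \<Rightarrow> real) \<Rightarrow> nat \<Rightarrow> real"
  where "ord_kernel3 a b c p q m = c m * pair_upto q (ord_kernel2 a b p) m"

definition ord_form2 :: "(nat \<Rightarrow> real) \<Rightarrow> (nat \<Rightarrow> real) \<Rightarrow> (nat \<Rightarrow> real) \<Rightarrow> (nat \<Rightarrow> real) \<Rightarrow> real" where
  "ord_form2 a b p q = pair q (ord_kernel2 a b p)"

definition ord_form3 ::
  "(nat \<Rightarrow> real) \<Rightarrow> (nat \<Rightarrow> real) \<Rightarrow> (nat \<Rightarrow> real) \<Rightarrow> (nat \<Rightarrow> real) \<Rightarrow> (nat \<Rightarrow> real) \<Rightarrow> (nat \<Rightarrow> real) \<Rightarrow> real"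
  where "ord_form3 a b c p q r = pair r (ord_kernel3 a b c p q)"

definition sym_form3 ::
  "(nat \<Rightarrow> real) \<Rightarrow> (nat \<Rightarrow> real) \<Rightarrow> (nat \<Rightarrow> real) \<Rightarrow> (nat \<Rightarrow> real) \<Rightarrow> (nat \<Rightarrow> real) \<Rightarrow> (nat \<Rightarrow> real) \<Rightarrow> real"
  where "sym_form3 a b c x y u =
    ord_form3 a b c x y u + ord_form3 a b c x u y + ord_form3 a b c y x u +
    ord_form3 a b c y u x + ord_form3 a b c u x y + ord_form3 a b c u y x"

lemma ord_kernel2_add: "ord_kernel2 a b (\<lambda>n. x n + y n) j = ord_kernel2 a b x j + ord_kernel2 a b y j"
  by (simp add: ord_kernel2_def pair_upto_add_left distrib_left)

lemma ord_kernel2_scale: "ord_kernel2 a b (\<lambda>n. r * x n) j = r * ord_kernel2 a b x j"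
  by (simp add: ord_kernel2_def pair_upto_scale_left)

lemma ord_kernel3_add_left:
  "ord_kernel3 a b c (\<lambda>n. x n + y n) q m = ord_kernel3 a b c x q m + ord_kernel3 a b c y q m"
  by (simp add: ord_kernel3_def pair_upto_def ord_kernel2_add sum.distrib algebra_simps)

lemma ord_kernel3_scale_left: "ord_kernel3 a b c (\<lambda>n. r * x n) q m = r * ord_kernel3 a b c x q m"
  by (simp add: ord_kernel3_def pair_upto_def ord_kernel2_scale sum_distrib_left algebra_simps)

lemma ord_kernel3_add_right:
  "ord_kernel3 a b c p (\<lambda>n. x n + y n) m = ord_kernel3 a b c p x m + ord_kernel3 a b c p y m"
  by (simp add: ord_kernel3_def pair_upto_add_left distrib_left)

lemma ord_kernel3_scale_right: "ord_kernel3 a b c p (\<lambda>n. r * x n) m = r * ord_kernel3 a b c p x m"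
  by (simp add: ord_kernel3_def pair_upto_scale_left)

lemma ord_kernel2_unit_vec: "j \<le> k \<Longrightarrow> ord_kernel2 a b (unit_vec k) j = 0"
  by (simp add: ord_kernel2_def pair_upto_unit_vec)

lemma ord_kernel3_unit_vec_left: "m \<le> k \<Longrightarrow> ord_kernel3 a b c (unit_vec k) q m = 0"
  unfolding ord_kernel3_def pair_upto_def by (simp add: ord_kernel2_unit_vec)

lemma ord_kernel3_unit_vec_right: "m \<le> k \<Longrightarrow> ord_kernel3 a b c p (unit_vec k) m = 0"
  by (simp add: ord_kernel3_def pair_upto_unit_vec)

lemma ord_form2_unit_vec_right: "ord_form2 a b p (unit_vec k) = b k * pair_upto p a k"
  by (simp add: ord_form2_def pair_unit_vec ord_kernel2_def)

lemma ord_form3_unit_vec_right: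
  "ord_form3 a b c p q (unit_vec k) = c k * pair_upto q (ord_kernel2 a b p) k"
  by (simp add: ord_form3_def pair_unit_vec ord_kernel3_def)

lemma sym_form3_unit_vec:
  "sym_form3 a b c x y (unit_vec k) =
     c k * (pair_upto y (ord_kernel2 a b x) k + pair_upto x (ord_kernel2 a b y) k) +
     (ord_form3 a b c x (unit_vec k) y + ord_form3 a b c y (unit_vec k) x +
      ord_form3 a b c (unit_vec k) x y + ord_form3 a b c (unit_vec k) y x)"
  by (simp add: sym_form3_def ord_form3_unit_vec_right algebra_simps)

locale bounded_coeffs =
  fixes a b c :: "nat \<Rightarrow> real" and Ma Mb Mc :: real
  assumes a_bound: "\<And>n. \<bar>a n\<bar> \<le> Ma" and b_bound: "\<And>n. \<bar>b n\<bar> \<le> Mb"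
    and c_bound: "\<And>n. \<bar>c n\<bar> \<le> Mc"
begin

lemma a_linf: "a \<in> linf" and b_linf: "b \<in> linf" and c_linf: "c \<in> linf"
  using a_bound b_bound c_bound by (auto intro: linfI)

lemma ord_kernel2_abs_le:
  assumes p: "p \<in> l1"
  shows "\<bar>ord_kernel2 a b p j\<bar> \<le> Mb * Ma * l1norm p"
proof -
  have "\<bar>b j\<bar> * \<bar>pair_upto p a j\<bar> \<le> Mb * (Ma * l1norm p)"
    using b_bound[of 0] by (intro mult_mono b_bound pair_upto_abs_le[OF p a_bound]) auto
  then show ?thesis by (simp add: ord_kernel2_def abs_mult mult.assoc)
qed

lemma ord_kernel3_abs_le:
  assumes p: "p \<in> l1" and q: "q \<in> l1"
  shows "\<bar>ord_kernel3 a b c p q m\<bar> \<le> Mc * Mb * Ma * l1norm p * l1norm q"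
proof -
  have "\<bar>c m\<bar> * \<bar>pair_upto q (ord_kernel2 a b p) m\<bar> \<le> Mc * (Mb * Ma * l1norm p * l1norm q)"
    using c_bound[of 0]
    by (intro mult_mono c_bound pair_upto_abs_le[OF q ord_kernel2_abs_le[OF p]]) auto
  then show ?thesis by (simp add: ord_kernel3_def abs_mult mult.assoc)
qed

lemma ord_kernel2_linf: "p \<in> l1 \<Longrightarrow> ord_kernel2 a b p \<in> linf"
  by (rule linfI, rule ord_kernel2_abs_le)

lemma ord_kernel3_linf: "p \<in> l1 \<Longrightarrow> q \<in> l1 \<Longrightarrow> ord_kernel3 a b c p q \<in> linf"
  by (rule linfI, rule ord_kernel3_abs_le)

lemma ord_form3_abs_le:
  assumes "p \<in> l1" "q \<in> l1" "r \<in> l1"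
  shows "\<bar>ord_form3 a b c p q r\<bar> \<le> Mc * Mb * Ma * l1norm p * l1norm q * l1norm r"
  using pair_abs_le[OF assms(3) ord_kernel3_abs_le[OF assms(1,2)]]
  by (simp add: ord_form3_def mult_ac)

lemma bounded_linear_ord_form2_arg1: "q \<in> l1 \<Longrightarrow> bounded_linear_l1 (\<lambda>p. ord_form2 a b p q)"
  unfolding ord_form2_def
  by (rule bounded_linear_l1_pair_right[where C="Mb * Ma"])
    (simp_all add: ord_kernel2_add ord_kernel2_scale ord_kernel2_abs_le)

lemma bounded_linear_ord_form2_arg2: "p \<in> l1 \<Longrightarrow> bounded_linear_l1 (\<lambda>q. ord_form2 a b p q)"
  unfolding ord_form2_def by (rule bounded_linear_l1_pair[OF ord_kernel2_linf])

lemma bounded_linear_ord_form3_arg1: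
  assumes q: "q \<in> l1" and r: "r \<in> l1"
  shows "bounded_linear_l1 (\<lambda>p. ord_form3 a b c p q r)"
  unfolding ord_form3_def
proof (rule bounded_linear_l1_pair_right[OF r])
  show "\<bar>ord_kernel3 a b c u q n\<bar> \<le> (Mc * Mb * Ma * l1norm q) * l1norm u" if "u \<in> l1" for u n
    using ord_kernel3_abs_le[OF that q] by (simp add: mult_ac)
qed (simp_all add: ord_kernel3_add_left ord_kernel3_scale_left)

lemma bounded_linear_ord_form3_arg2:
  assumes p: "p \<in> l1" and r: "r \<in> l1"
  shows "bounded_linear_l1 (\<lambda>q. ord_form3 a b c p q r)"
  unfolding ord_form3_def
proof (rule bounded_linear_l1_pair_right[OF r])
  show "\<bar>ord_kernel3 a b c p u n\<bar> \<le> (Mc * Mb * Ma * l1norm p) * l1norm u" if "u \<in> l1" for u n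
    using ord_kernel3_abs_le[OF p that] by (simp add: mult_ac)
qed (simp_all add: ord_kernel3_add_right ord_kernel3_scale_right)

lemma bounded_linear_ord_form3_arg3:
  "p \<in> l1 \<Longrightarrow> q \<in> l1 \<Longrightarrow> bounded_linear_l1 (\<lambda>r. ord_form3 a b c p q r)"
  unfolding ord_form3_def by (rule bounded_linear_l1_pair[OF ord_kernel3_linf])

lemma bounded_linear_sym_form3:
  "x \<in> l1 \<Longrightarrow> y \<in> l1 \<Longrightarrow> bounded_linear_l1 (sym_form3 a b c x y)"
  unfolding sym_form3_def
  by (intro bounded_linear_l1_add bounded_linear_ord_form3_arg1 bounded_linear_ord_form3_arg2
      bounded_linear_ord_form3_arg3)

lemma cont_sym_trilinear_sym_form3: "cont_sym_trilinear_l1 (sym_form3 a b c)"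
proof (rule cont_sym_trilinear_l1I)
  show "sym_form3 a b c x y u = sym_form3 a b c y x u" "sym_form3 a b c x y u = sym_form3 a b c x u y"
    for x y u by (simp_all add: sym_form3_def)
  show "bounded_linear_l1 (sym_form3 a b c x y)" if "x \<in> l1" "y \<in> l1" for x y
    using that by (rule bounded_linear_sym_form3)
  fix x y u assume x: "x \<in> l1" and y: "y \<in> l1" and u: "u \<in> l1"
  define K where "K = Mc * Mb * Ma * (l1norm x * l1norm y * l1norm u)"
  have "\<bar>ord_form3 a b c x y u\<bar> \<le> K" "\<bar>ord_form3 a b c x u y\<bar> \<le> K"
    "\<bar>ord_form3 a b c y x u\<bar> \<le> K" "\<bar>ord_form3 a b c y u x\<bar> \<le> K"
    "\<bar>ord_form3 a b c u x y\<bar> \<le> K" "\<bar>ord_form3 a b c u y x\<bar> \<le> K"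
    using ord_form3_abs_le[OF x y u] ord_form3_abs_le[OF x u y] ord_form3_abs_le[OF y x u]
      ord_form3_abs_le[OF y u x] ord_form3_abs_le[OF u x y] ord_form3_abs_le[OF u y x]
    by (simp_all add: K_def mult_ac)
  then have "\<bar>sym_form3 a b c x y u\<bar> \<le> 6 * K"
    unfolding sym_form3_def abs_le_iff by linarith
  then show "\<bar>sym_form3 a b c x y u\<bar> \<le> (6 * (Mc * Mb * Ma)) * l1norm x * l1norm y * l1norm u"
    by (simp add: K_def mult_ac)
qed

lemma ord_form2_unit_vec_left_tendsto_zero:
  assumes q: "q \<in> l1"
  shows "(\<lambda>k. ord_form2 a b (unit_vec k) q) \<longlonglongrightarrow> 0"
  unfolding ord_form2_def
proof (rule tendsto_pair_zero_if_vanishing_below[OF q])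
  show "\<bar>ord_kernel2 a b (unit_vec k) n\<bar> \<le> Mb * Ma" for k n
    using ord_kernel2_abs_le[OF unit_vec_in_l1] by (simp add: l1norm_unit_vec)
qed (simp add: ord_kernel2_unit_vec)

lemma ord_form3_unit_vec_left_tendsto_zero:
  assumes q: "q \<in> l1" and r: "r \<in> l1"
  shows "(\<lambda>k. ord_form3 a b c (unit_vec k) q r) \<longlonglongrightarrow> 0"
  unfolding ord_form3_def
proof (rule tendsto_pair_zero_if_vanishing_below[OF r])
  show "\<bar>ord_kernel3 a b c (unit_vec k) q n\<bar> \<le> Mc * Mb * Ma * l1norm q" for k n
    using ord_kernel3_abs_le[OF unit_vec_in_l1 q] by (simp add: l1norm_unit_vec)
qed (simp add: ord_kernel3_unit_vec_left)

lemma ord_form3_unit_vec_mid_tendsto_zero: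
  assumes p: "p \<in> l1" and r: "r \<in> l1"
  shows "(\<lambda>k. ord_form3 a b c p (unit_vec k) r) \<longlonglongrightarrow> 0"
  unfolding ord_form3_def
proof (rule tendsto_pair_zero_if_vanishing_below[OF r])
  show "\<bar>ord_kernel3 a b c p (unit_vec k) n\<bar> \<le> Mc * Mb * Ma * l1norm p" for k n
    using ord_kernel3_abs_le[OF p unit_vec_in_l1] by (simp add: l1norm_unit_vec)
qed (simp add: ord_kernel3_unit_vec_right)

lemma tendsto_sym_form3:
  assumes x: "x \<in> l1" and y: "y \<in> l1" and F: "wstar_conv F z" and z: "c0_perp z"
  shows "(sym_form3 a b c x y \<longlongrightarrow> (ord_form2 a b x y + ord_form2 a b y x) * z c) F"
proof (rule tendsto_wstar_c0_perp[OF F z bounded_linear_sym_form3[OF x y] c_linf _ _ sym_form3_unit_vec])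
  show "(\<lambda>k. pair_upto y (ord_kernel2 a b x) k + pair_upto x (ord_kernel2 a b y) k)
      \<longlonglongrightarrow> ord_form2 a b x y + ord_form2 a b y x"
    unfolding ord_form2_def using x y by (intro tendsto_add pair_upto_tendsto ord_kernel2_linf)
  show "(\<lambda>k. ord_form3 a b c x (unit_vec k) y + ord_form3 a b c y (unit_vec k) x +
      ord_form3 a b c (unit_vec k) x y + ord_form3 a b c (unit_vec k) y x) \<longlonglongrightarrow> 0"
    using x y by (intro tendsto_add_zero ord_form3_unit_vec_left_tendsto_zero
        ord_form3_unit_vec_mid_tendsto_zero)
qed

lemma tendsto_ord_form2_sym:
  assumes x: "x \<in> l1" and F: "wstar_conv F z" and z: "c0_perp z"
  shows "((\<lambda>y. ord_form2 a b x y + ord_form2 a b y x) \<longlongrightarrow> pair x a * z b) F"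
proof (rule tendsto_wstar_c0_perp[OF F z _ b_linf])
  show "bounded_linear_l1 (\<lambda>y. ord_form2 a b x y + ord_form2 a b y x)"
    using x by (intro bounded_linear_l1_add bounded_linear_ord_form2_arg1 bounded_linear_ord_form2_arg2)
  show "pair_upto x a \<longlonglongrightarrow> pair x a"
    using x a_linf by (rule pair_upto_tendsto)
  show "(\<lambda>k. ord_form2 a b (unit_vec k) x) \<longlonglongrightarrow> 0"
    using x by (rule ord_form2_unit_vec_left_tendsto_zero)
  show "ord_form2 a b x (unit_vec k) + ord_form2 a b (unit_vec k) x =
      b k * pair_upto x a k + ord_form2 a b (unit_vec k) x" for k
    by (simp add: ord_form2_unit_vec_right)
qed

lemma AB_ext_value_sym_form3:
  assumes z2: "c0_perp z2" and z3: "c0_perp z3"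
  shows "AB_ext_value (sym_form3 a b c) z1 z2 z3 (z1 a * z2 b * z3 c)"
proof (rule AB_ext_valueI[where B="\<lambda>x y. (ord_form2 a b x y + ord_form2 a b y x) * z3 c"
      and C="\<lambda>x. pair x a * z2 b * z3 c"])
  show "(sym_form3 a b c x y \<longlongrightarrow> (ord_form2 a b x y + ord_form2 a b y x) * z3 c) F"
    if "wstar_conv F z3" "x \<in> l1" "y \<in> l1" for F x y
    using that(2,3,1) z3 by (rule tendsto_sym_form3)
  show "((\<lambda>y. (ord_form2 a b x y + ord_form2 a b y x) * z3 c) \<longlongrightarrow> pair x a * z2 b * z3 c) F"
    if "wstar_conv F z2" "x \<in> l1" for F x
    using that(2,1) z2 by (intro tendsto_mult_right tendsto_ord_form2_sym)
  show "((\<lambda>x. pair x a * z2 b * z3 c) \<longlongrightarrow> z1 a * z2 b * z3 c) F" if "wstar_conv F z1" for F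
  proof -
    have "((\<lambda>x. pair x a) \<longlongrightarrow> z1 a) F" using that a_linf by (simp add: wstar_conv_def)
    then show ?thesis by (intro tendsto_mult_right)
  qed
qed

end

theorem lemma3p3:
  fixes a b c :: "nat \<Rightarrow> real"
  assumes "a \<in> linf" and "b \<in> linf" and "c \<in> linf"
  shows "\<exists>A. cont_sym_trilinear_l1 A \<and>
    (\<forall>z1 z2 z3. l1_bidual z1 \<and> c0_perp z2 \<and> c0_perp z3 \<longrightarrow>
        AB_ext_value A z1 z2 z3 (z1 a * z2 b * z3 c))"
proof -
  obtain Ma Mb Mc where "\<And>n. \<bar>a n\<bar> \<le> Ma" "\<And>n. \<bar>b n\<bar> \<le> Mb" "\<And>n. \<bar>c n\<bar> \<le> Mc"
    using assms unfolding linf_def by blast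
  then interpret bounded_coeffs a b c Ma Mb Mc by unfold_locales
  show ?thesis using cont_sym_trilinear_sym_form3 AB_ext_value_sym_form3 by blast
qed

end
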